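(* Let $G$ be a finite connected simple graph not isomorphic to $C_3$, $C_4$ or $C_5$. Then at least one of $G$, $\mathrm{L}(G)$, $\mathrm{L}^{(2)}(G)$ is not strongly regular; more precisely, there is $m\in\{0,1,2\}$ such that $\mathrm{L}^{(m)}(G)$ is not strongly regular.
   Context: A finite simple graph on $v\ge1$ vertices is strongly regular with parameters $(v,k,\lambda,\mu)$, where $k,\lambda,\mu$ are nonnegative integers, if every vertex has degree $k$, every pair of adjacent vertices has exactly $\lambda$ common neighbours, and every pair of distinct non-adjacent vertices has exactly $\mu$ common neighbours; by convention the graph with no vertices is not strongly regular. $\mathrm{L}(G)$ has vertex set $E(G)$, two vertices adjacent iff the corresponding edges share an endpoint; $\mathrm{L}^{(0)}(G)=G$, $\mathrm{L}^{(m)}(G)=\mathrm{L}(\mathrm{L}^{(m-1)}(G))$. $C_n$ is the cycle on $n$ vertices. *)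

theory Defs
  imports Main
begin

text \<open>A graph is a pair (vertex set, edge set); edges are 2-element vertex sets.\<close>
type_synonym 'a graph = "'a set \<times> 'a set set"

definition simple_graph :: "'a graph \<Rightarrow> bool" where
  "simple_graph G \<longleftrightarrow> finite (fst G) \<and>
     (\<forall>e\<in>snd G. \<exists>u v. u \<noteq> v \<and> e = {u, v} \<and> u \<in> fst G \<and> v \<in> fst G)"

definition adj :: "'a graph \<Rightarrow> 'a \<Rightarrow> 'a \<Rightarrow> bool" where
  "adj G u v \<longleftrightarrow> u \<noteq> v \<and> {u, v} \<in> snd G"

definition nbrs :: "'a graph \<Rightarrow> 'a \<Rightarrow> 'a set" where
  "nbrs G v = {u \<in> fst G. adj G u v}"

definition strongly_regular :: "'a graph \<Rightarrow> bool" where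
  "strongly_regular G \<longleftrightarrow> simple_graph G \<and> fst G \<noteq> {} \<and>
     (\<exists>k l m :: nat.
        (\<forall>v\<in>fst G. card (nbrs G v) = k) \<and>
        (\<forall>u\<in>fst G. \<forall>v\<in>fst G. u \<noteq> v \<and> adj G u v \<longrightarrow> card (nbrs G u \<inter> nbrs G v) = l) \<and>
        (\<forall>u\<in>fst G. \<forall>v\<in>fst G. u \<noteq> v \<and> \<not> adj G u v \<longrightarrow> card (nbrs G u \<inter> nbrs G v) = m))"

definition line_graph :: "'a graph \<Rightarrow> 'a set graph" where
  "line_graph G = (snd G, {{e, f} | e f. e \<in> snd G \<and> f \<in> snd G \<and> e \<noteq> f \<and> e \<inter> f \<noteq> {}})"

definition connected_graph :: "'a graph \<Rightarrow> bool" where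
  "connected_graph G \<longleftrightarrow> fst G \<noteq> {} \<and>
     (\<forall>u\<in>fst G. \<forall>v\<in>fst G. (u, v) \<in> {(x, y). adj G x y}\<^sup>*)"

definition graph_iso :: "'a graph \<Rightarrow> 'b graph \<Rightarrow> bool" where
  "graph_iso G H \<longleftrightarrow> (\<exists>f. bij_betw f (fst G) (fst H) \<and>
     (\<forall>u\<in>fst G. \<forall>v\<in>fst G. adj G u v \<longleftrightarrow> adj H (f u) (f v)))"

text \<open>The cycle C_n on vertices 0..n-1 (meaningful for n >= 3).\<close>
definition cycle_graph :: "nat \<Rightarrow> nat graph" where
  "cycle_graph n = ({0..<n}, {{i, (i + 1) mod n} | i. i < n})"

end

theory Submission
  imports Defs
begin

text \<open>
  For edges {a,b} and {b,c} of H, the number of common neighbours of these two vertices of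
  L(H) is deg b - 2, plus one if {a,c} is also an edge. Hence if H and L(H) are both strongly
  regular, H cannot contain both a triangle and an induced path on three vertices.
  If G has a triangle, this makes the connected graph G complete; a complete graph with four
  vertices a, b, c, d has a line graph containing a triangle and the induced path {a,b}, {b,c},
  {c,d}, so G = C_3. If G is triangle-free, regularity extends a path of length two to a path on
  four vertices, so L(G) has an induced path and hence no triangle; thus every degree is at most
  two and G is 2-regular. Since the ends of a path of length two are non-adjacent with a common
  neighbour, \<mu> > 0, so G has diameter two, which leaves C_4 and C_5.
\<close>

definition has_triangle :: "'a graph \<Rightarrow> bool" where
  "has_triangle H \<longleftrightarrow> (\<exists>a b c. adj H a b \<and> adj H b c \<and> adj H a c)"

definition has_induced_path3 :: "'a graph \<Rightarrow> bool" where
  "has_induced_path3 H \<longleftrightarrow> (\<exists>x y z. adj H x y \<and> adj H y z \<and> x \<noteq> z \<and> \<not> adj H x z)"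

definition incident_edges :: "'a graph \<Rightarrow> 'a \<Rightarrow> 'a set set" where
  "incident_edges H v = {e \<in> snd H. v \<in> e}"

lemma adj_commute: "adj H u v \<longleftrightarrow> adj H v u"
  unfolding adj_def by (auto simp: insert_commute)

lemma adj_imp_neq: "adj H u v \<Longrightarrow> u \<noteq> v"
  unfolding adj_def by blast

lemma adj_imp_vertices:
  assumes "simple_graph H" "adj H u v"
  shows "u \<in> fst H" "v \<in> fst H"
  using assms unfolding simple_graph_def adj_def by (fastforce simp: doubleton_eq_iff)+

lemma mem_nbrs_iff:
  assumes "simple_graph H"
  shows "u \<in> nbrs H v \<longleftrightarrow> adj H u v"
  unfolding nbrs_def using adj_imp_vertices[OF assms] by blast

lemma finite_nbrs: "simple_graph H \<Longrightarrow> finite (nbrs H v)"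
  unfolding simple_graph_def nbrs_def by auto

lemma finite_edges:
  assumes "simple_graph H"
  shows "finite (snd H)"
proof (rule finite_subset)
  show "snd H \<subseteq> Pow (fst H)"
    using assms unfolding simple_graph_def by auto
  show "finite (Pow (fst H))"
    using assms unfolding simple_graph_def by simp
qed

lemma edge_obtain_other_end:
  assumes "simple_graph H" "e \<in> snd H" "b \<in> e"
  obtains a where "a \<noteq> b" "e = {a, b}" "adj H a b"
proof -
  obtain p q where "p \<noteq> q" "e = {p, q}"
    using assms(1,2) unfolding simple_graph_def by blast
  with assms(2,3) that show thesis
    unfolding adj_def by (metis insert_commute insertE singletonD)
qed

lemma card_incident_edges:
  assumes "simple_graph H"
  shows "card (incident_edges H v) = card (nbrs H v)"
proof -
  have "incident_edges H v = (\<lambda>u. {u, v}) ` nbrs H v"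
  proof (intro equalityI subsetI)
    fix e assume "e \<in> incident_edges H v"
    then obtain u where "e = {u, v}" "adj H u v"
      using edge_obtain_other_end[OF assms] unfolding incident_edges_def by blast
    then show "e \<in> (\<lambda>u. {u, v}) ` nbrs H v"
      using mem_nbrs_iff[OF assms] by blast
  qed (auto simp: incident_edges_def nbrs_def adj_def)
  moreover have "inj_on (\<lambda>u. {u, v}) (nbrs H v)"
    unfolding inj_on_def nbrs_def adj_def by (auto simp: doubleton_eq_iff)
  ultimately show ?thesis
    by (simp add: card_image)
qed

lemma card_2_obtain_other:
  assumes "card S = 2" "a \<in> S"
  obtains b where "b \<noteq> a" "S = {a, b}"
  using assms unfolding card_2_iff by (metis doubleton_eq_iff insertE singletonD)

lemma card_2_eq_doubleton:
  assumes "card S = 2" "a \<in> S" "b \<in> S" "a \<noteq> b"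
  shows "S = {a, b}"
  using assms by (auto simp: card_2_iff)

lemma card_ge_2_obtain_other:
  assumes "2 \<le> card S"
  obtains x where "x \<in> S" "x \<noteq> a"
proof -
  have "\<not> S \<subseteq> {a}"
  proof
    assume "S \<subseteq> {a}"
    then have "card S \<le> card {a}"
      by (rule card_mono[rotated]) simp
    with assms show False by simp
  qed
  with that show thesis by blast
qed

lemma adj_if_connected_no_induced_path3:
  assumes "connected_graph H" "\<not> has_induced_path3 H"
    and "u \<in> fst H" "v \<in> fst H" "u \<noteq> v"
  shows "adj H u v"
proof -
  have "(u, v) \<in> {(x, y). adj H x y}\<^sup>*"
    using assms(1,3,4) unfolding connected_graph_def by blast
  then have "u = v \<or> adj H u v"
  proof (induction rule: rtrancl_induct)
    case (step y z)
    then show ?case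
      using assms(2) unfolding has_induced_path3_def by blast
  qed simp
  with assms(5) show ?thesis by blast
qed

subsection \<open>Line graphs\<close>

lemma fst_line_graph [simp]: "fst (line_graph H) = snd H"
  unfolding line_graph_def by simp

lemma adj_line_graph_iff:
  "adj (line_graph H) e f \<longleftrightarrow> e \<in> snd H \<and> f \<in> snd H \<and> e \<noteq> f \<and> e \<inter> f \<noteq> {}"
  unfolding adj_def line_graph_def by (auto simp: doubleton_eq_iff)

lemma line_graph_edge_obtain_path:
  assumes "simple_graph H" "snd (line_graph H) \<noteq> {}"
  obtains a b c where "adj H a b" "adj H b c" "a \<noteq> c"
proof -
  obtain e f where ef: "e \<in> snd H" "f \<in> snd H" "e \<noteq> f" "e \<inter> f \<noteq> {}"
    using assms(2) unfolding line_graph_def by auto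
  then obtain b where "b \<in> e" "b \<in> f" by blast
  obtain a where a: "e = {a, b}" "adj H a b"
    using edge_obtain_other_end[OF assms(1) ef(1) \<open>b \<in> e\<close>] by blast
  obtain c where c: "f = {c, b}" "adj H c b"
    using edge_obtain_other_end[OF assms(1) ef(2) \<open>b \<in> f\<close>] by blast
  from ef(3) a c have "a \<noteq> c" by blast
  with a c that show thesis by (metis adj_commute)
qed

lemma adj_line_graph_path:
  "adj H a b \<Longrightarrow> adj H b c \<Longrightarrow> a \<noteq> c \<Longrightarrow> adj (line_graph H) {a, b} {b, c}"
  unfolding adj_line_graph_iff by (auto simp: adj_def doubleton_eq_iff)

lemma common_nbrs_line_graph:
  assumes "simple_graph H" "adj H a b" "adj H b c" "a \<noteq> c"
  shows "nbrs (line_graph H) {a, b} \<inter> nbrs (line_graph H) {b, c}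
       = (incident_edges H b - {{a, b}, {b, c}}) \<union> ({{a, c}} \<inter> snd H)"
  using assms unfolding nbrs_def adj_line_graph_iff incident_edges_def
  by (auto simp: simple_graph_def adj_def doubleton_eq_iff)

lemma card_common_nbrs_line_graph:
  assumes "simple_graph H" "adj H a b" "adj H b c" "a \<noteq> c"
  shows "card (nbrs (line_graph H) {a, b} \<inter> nbrs (line_graph H) {b, c})
       = card (nbrs H b) - 2 + (if adj H a c then 1 else 0)"
proof -
  let ?I = "incident_edges H b - {{a, b}, {b, c}}"
  have fin: "finite (incident_edges H b)"
    using finite_edges[OF assms(1)] unfolding incident_edges_def by auto
  have "{{a, b}, {b, c}} \<subseteq> incident_edges H b" "card {{a, b}, {b, c}} = 2"
    using assms(2-4) unfolding incident_edges_def adj_def by (auto simp: doubleton_eq_iff)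
  then have "card ?I = card (nbrs H b) - 2"
    using fin card_incident_edges[OF assms(1)] by (simp add: card_Diff_subset finite_subset)
  moreover have "card (?I \<union> ({{a, c}} \<inter> snd H)) = card ?I + card ({{a, c}} \<inter> snd H)"
    using fin assms(4) by (intro card_Un_disjoint) (auto simp: incident_edges_def doubleton_eq_iff)
  moreover have "card ({{a, c}} \<inter> snd H) = (if adj H a c then 1 else 0)"
    using assms(4) unfolding adj_def by auto
  ultimately show ?thesis
    using common_nbrs_line_graph[OF assms] by simp
qed

lemma strongly_regular_line_graph_no_triangle_and_path3:
  assumes "strongly_regular H" "strongly_regular (line_graph H)"
  shows "\<not> (has_triangle H \<and> has_induced_path3 H)"
proof
  assume "has_triangle H \<and> has_induced_path3 H"
  then obtain a b c x y z where tri: "adj H a b" "adj H b c" "adj H a c"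
    and path: "adj H x y" "adj H y z" "x \<noteq> z" "\<not> adj H x z"
    unfolding has_triangle_def has_induced_path3_def by blast
  have s: "simple_graph H"
    using assms(1) unfolding strongly_regular_def by blast
  obtain k where deg: "\<forall>v\<in>fst H. card (nbrs H v) = k"
    using assms(1) unfolding strongly_regular_def by blast
  obtain l where lambda: "\<forall>e\<in>snd H. \<forall>f\<in>snd H. e \<noteq> f \<and> adj (line_graph H) e f
      \<longrightarrow> card (nbrs (line_graph H) e \<inter> nbrs (line_graph H) f) = l"
    using assms(2) unfolding strongly_regular_def by auto
  have "a \<noteq> c"
    using tri(3) by (rule adj_imp_neq)
  then have "card (nbrs H b) - 2 + 1 = l"
    using lambda adj_line_graph_path[OF tri(1,2)] card_common_nbrs_line_graph[OF s tri(1,2)] tri(3)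
    unfolding adj_line_graph_iff by auto
  moreover have "card (nbrs H y) - 2 = l"
    using lambda adj_line_graph_path[OF path(1-3)] card_common_nbrs_line_graph[OF s path(1-3)] path(4)
    unfolding adj_line_graph_iff by auto
  moreover have "card (nbrs H b) = card (nbrs H y)"
    using deg adj_imp_vertices[OF s tri(1)] adj_imp_vertices[OF s path(1)] by simp
  ultimately show False by simp
qed

lemma has_triangle_line_graph_if_triangle:
  assumes "has_triangle H"
  shows "has_triangle (line_graph H)"
proof -
  obtain a b c where "adj H a b" "adj H b c" "adj H a c"
    using assms unfolding has_triangle_def by blast
  then have "adj (line_graph H) {a, b} {b, c}" "adj (line_graph H) {b, c} {a, c}"
    "adj (line_graph H) {a, b} {a, c}"
    unfolding adj_line_graph_iff by (auto simp: adj_def doubleton_eq_iff)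
  then show ?thesis
    unfolding has_triangle_def by blast
qed

lemma has_triangle_line_graph_if_three_nbrs:
  assumes "adj H a x" "adj H b x" "adj H c x" "a \<noteq> b" "b \<noteq> c" "a \<noteq> c"
  shows "has_triangle (line_graph H)"
proof -
  have "adj (line_graph H) {a, x} {b, x}" "adj (line_graph H) {b, x} {c, x}"
    "adj (line_graph H) {a, x} {c, x}"
    using assms unfolding adj_line_graph_iff by (auto simp: adj_def doubleton_eq_iff)
  then show ?thesis
    unfolding has_triangle_def by blast
qed

lemma card_nbrs_le_2_if_line_graph_triangle_free:
  assumes "simple_graph H" "\<not> has_triangle (line_graph H)"
  shows "card (nbrs H x) \<le> 2"
proof (rule ccontr)
  assume "\<not> card (nbrs H x) \<le> 2"
  then obtain T where "T \<subseteq> nbrs H x" "card T = 3"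
    by (metis not_less_eq_eq numeral_2_eq_2 numeral_3_eq_3 obtain_subset_with_card_n)
  then obtain a b c where "a \<in> nbrs H x" "b \<in> nbrs H x" "c \<in> nbrs H x"
    "a \<noteq> b" "b \<noteq> c" "a \<noteq> c"
    by (auto simp: card_3_iff)
  then show False
    using assms has_triangle_line_graph_if_three_nbrs mem_nbrs_iff by metis
qed

lemma has_induced_path3_line_graph:
  assumes "adj H a b" "adj H b c" "adj H c d" "a \<noteq> c" "b \<noteq> d" "a \<noteq> d"
  shows "has_induced_path3 (line_graph H)"
proof -
  have "adj (line_graph H) {a, b} {b, c}" "adj (line_graph H) {b, c} {c, d}"
    "{a, b} \<noteq> {c, d}" "\<not> adj (line_graph H) {a, b} {c, d}"
    using assms unfolding adj_line_graph_iff by (auto simp: adj_def doubleton_eq_iff)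
  then show ?thesis
    unfolding has_induced_path3_def by blast
qed

subsection \<open>Recognising cycles\<close>

lemma adj_cycle_graph_iff:
  assumes "i < n" "j < n"
  shows "adj (cycle_graph n) i j \<longleftrightarrow> i \<noteq> j \<and> (j = Suc i mod n \<or> i = Suc j mod n)"
  using assms unfolding adj_def cycle_graph_def by (auto simp: doubleton_eq_iff)

lemma eq_pred_mod_iff:
  fixes i j n :: nat
  assumes "i < n" "j < n"
  shows "i = (j + n - 1) mod n \<longleftrightarrow> j = Suc i mod n"
  using assms by (cases "j = 0"; cases "Suc i = n") (auto simp: mod_if)

lemma graph_iso_cycle_graphI:
  assumes "simple_graph H" "distinct xs" "set xs = fst H" "length xs = n"
    and nbrs_xs: "\<forall>i\<in>{..<n}. nbrs H (xs ! i) = {xs ! (Suc i mod n), xs ! ((i + n - 1) mod n)}"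
  shows "graph_iso H (cycle_graph n)"
proof -
  have bij: "bij_betw ((!) xs) {..<n} (fst H)"
    using assms(2-4) by (intro bij_betw_nth) auto
  have adj_nth: "adj H (xs ! i) (xs ! j) \<longleftrightarrow> adj (cycle_graph n) i j" if "i < n" "j < n" for i j
  proof -
    have "n > 0" using that by simp
    then have "adj H (xs ! i) (xs ! j) \<longleftrightarrow> i \<noteq> j \<and> xs ! i \<in> nbrs H (xs ! j)"
      using mem_nbrs_iff[OF assms(1)] unfolding adj_def by auto
    also have "\<dots> \<longleftrightarrow> i \<noteq> j \<and> (i = Suc j mod n \<or> i = (j + n - 1) mod n)"
      using that nbrs_xs assms(2,4) \<open>n > 0\<close> by (auto simp: nth_eq_iff_index_eq)
    also have "\<dots> \<longleftrightarrow> adj (cycle_graph n) i j"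
      unfolding adj_cycle_graph_iff[OF that] eq_pred_mod_iff[OF that] by blast
    finally show ?thesis .
  qed
  have cycle_vertices: "fst (cycle_graph n) = {..<n}"
    unfolding cycle_graph_def by auto
  let ?f = "inv_into {..<n} ((!) xs)"
  show ?thesis
    unfolding graph_iso_def
  proof (intro exI conjI ballI)
    show "bij_betw ?f (fst H) (fst (cycle_graph n))"
      using bij_betw_inv_into[OF bij] cycle_vertices by simp
    fix u v assume "u \<in> fst H" "v \<in> fst H"
    then have "?f u < n" "?f v < n" "xs ! ?f u = u" "xs ! ?f v = v"
      using bij by (auto intro!: inv_into_into[of _ _ "{..<n}", simplified] f_inv_into_f
          simp: bij_betw_def)
    then show "adj H u v \<longleftrightarrow> adj (cycle_graph n) (?f u) (?f v)"
      using adj_nth by metis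
  qed
qed

lemma vertices_within_distance_two:
  assumes "simple_graph H" "v \<in> fst H"
    and "\<forall>x\<in>fst H. \<forall>y\<in>fst H. x \<noteq> y \<and> \<not> adj H x y \<longrightarrow> nbrs H x \<inter> nbrs H y \<noteq> {}"
  shows "fst H \<subseteq> insert v (nbrs H v \<union> (\<Union>u\<in>nbrs H v. nbrs H u))"
proof
  fix z assume "z \<in> fst H"
  consider "z = v" | "adj H z v" | "z \<noteq> v" "\<not> adj H z v" by blast
  then show "z \<in> insert v (nbrs H v \<union> (\<Union>u\<in>nbrs H v. nbrs H u))"
  proof cases
    case 3
    then obtain u where "u \<in> nbrs H z" "u \<in> nbrs H v"
      using assms(2,3) \<open>z \<in> fst H\<close> by blast
    then have "z \<in> nbrs H u"
      using mem_nbrs_iff[OF assms(1)] adj_commute by metis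
    with \<open>u \<in> nbrs H v\<close> show ?thesis by blast
  qed (simp_all add: mem_nbrs_iff[OF assms(1)])
qed

lemma graph_iso_cycle3_if_triangle:
  assumes "simple_graph G" "connected_graph G" "has_triangle G"
    and "\<not> (has_triangle G \<and> has_induced_path3 G)"
    and "\<not> (has_triangle (line_graph G) \<and> has_induced_path3 (line_graph G))"
  shows "graph_iso G (cycle_graph 3)"
proof -
  obtain a b c where abc: "adj G a b" "adj G b c" "adj G a c"
    using assms(3) unfolding has_triangle_def by blast
  have "\<not> has_induced_path3 G"
    using assms(3,4) by blast
  then have complete: "adj G x y" if "x \<in> fst G" "y \<in> fst G" "x \<noteq> y" for x y
    using adj_if_connected_no_induced_path3[OF assms(2)] that by blast
  have abc_vertices: "a \<in> fst G" "b \<in> fst G" "c \<in> fst G"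
    using adj_imp_vertices[OF assms(1) abc(1)] adj_imp_vertices[OF assms(1) abc(2)] by simp_all
  have distinct: "a \<noteq> b" "b \<noteq> c" "a \<noteq> c"
    using abc by (simp_all add: adj_imp_neq)
  have vertices: "fst G = {a, b, c}"
  proof (rule ccontr)
    assume "fst G \<noteq> {a, b, c}"
    then obtain d where d: "d \<in> fst G" "d \<noteq> a" "d \<noteq> b" "d \<noteq> c"
      using abc_vertices by blast
    then have "adj G c d"
      using complete abc_vertices by metis
    then have "has_induced_path3 (line_graph G)"
      using has_induced_path3_line_graph abc(1,2) distinct(3) d(2,3) by metis
    then show False
      using assms(3,5) has_triangle_line_graph_if_triangle by blast
  qed
  have nbrs_complete: "nbrs G x = fst G - {x}" if "x \<in> fst G" for x
    unfolding nbrs_def using that by (auto intro: complete dest: adj_imp_neq)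
  have "nbrs G a = {b, c}" "nbrs G b = {c, a}" "nbrs G c = {a, b}"
    using nbrs_complete[OF abc_vertices(1)] nbrs_complete[OF abc_vertices(2)]
      nbrs_complete[OF abc_vertices(3)] distinct unfolding vertices by auto
  then show ?thesis
    by (intro graph_iso_cycle_graphI[where xs = "[a, b, c]"])
      (simp_all add: assms(1) distinct vertices lessThan_nat_numeral)
qed

lemma two_regular_diameter_two_obtain_neighbourhood:
  assumes s: "simple_graph G" and "v \<in> fst G" "\<not> has_triangle G"
    and deg2: "\<forall>z\<in>fst G. card (nbrs G z) = 2"
    and diam2: "\<forall>x\<in>fst G. \<forall>y\<in>fst G. x \<noteq> y \<and> \<not> adj G x y \<longrightarrow> nbrs G x \<inter> nbrs G y \<noteq> {}"
  obtains u w u' w' where "nbrs G v = {u, w}" "nbrs G u = {u', v}" "nbrs G w = {v, w'}"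
    "distinct [v, u, u', w]" "distinct [v, w', w, u]" "fst G \<subseteq> {v, u, w, u', w'}"
proof -
  obtain u w where nv: "nbrs G v = {u, w}" "u \<noteq> w"
    using deg2 \<open>v \<in> fst G\<close> card_2_iff by metis
  then have "adj G u v" "adj G w v"
    using mem_nbrs_iff[OF s] by blast+
  then have "v \<in> nbrs G u" "v \<in> nbrs G w" "u \<in> fst G" "w \<in> fst G" "\<not> adj G u w"
    using mem_nbrs_iff[OF s] adj_commute adj_imp_vertices[OF s] \<open>\<not> has_triangle G\<close>
    unfolding has_triangle_def by metis+
  then obtain u' w' where nu: "u' \<noteq> v" "nbrs G u = {v, u'}" and nw: "w' \<noteq> v" "nbrs G w = {v, w'}"
    using deg2 card_2_obtain_other by metis
  then have "adj G u' u" "adj G w' w"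
    using mem_nbrs_iff[OF s] by blast+
  then have "u' \<noteq> u" "u' \<noteq> w" "w' \<noteq> w" "w' \<noteq> u"
    using \<open>\<not> adj G u w\<close> adj_imp_neq adj_commute by metis+
  moreover have "fst G \<subseteq> {v, u, w, u', w'}"
    using vertices_within_distance_two[OF s \<open>v \<in> fst G\<close> diam2] nv nu nw by auto
  moreover have "nbrs G u = {u', v}"
    using nu by (simp add: insert_commute)
  moreover have "u \<noteq> v" "w \<noteq> v"
    using \<open>adj G u v\<close> \<open>adj G w v\<close> by (simp_all add: adj_imp_neq)
  ultimately show thesis
    using nv nw nu(1) by (intro that[of u w u' w']) simp_all
qed

lemma graph_iso_cycle4_or_5_if_two_regular:
  assumes s: "simple_graph G" and "v \<in> fst G" "\<not> has_triangle G"
    and deg2: "\<forall>z\<in>fst G. card (nbrs G z) = 2"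
    and "\<forall>x\<in>fst G. \<forall>y\<in>fst G. x \<noteq> y \<and> \<not> adj G x y \<longrightarrow> nbrs G x \<inter> nbrs G y \<noteq> {}"
  shows "graph_iso G (cycle_graph 4) \<or> graph_iso G (cycle_graph 5)"
proof -
  obtain u w u' w' where nv: "nbrs G v = {u, w}" and nu: "nbrs G u = {u', v}"
    and nw: "nbrs G w = {v, w'}" and d1: "distinct [v, u, u', w]" and d2: "distinct [v, w', w, u]"
    and cover: "fst G \<subseteq> {v, u, w, u', w'}"
    by (rule two_regular_diameter_two_obtain_neighbourhood[OF assms])
  have nbrs_sym: "x \<in> nbrs G y \<Longrightarrow> y \<in> nbrs G x" for x y
    using mem_nbrs_iff[OF s, of x y] mem_nbrs_iff[OF s, of y x] adj_commute[of G x y] by simp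
  have nbrs_vertex: "x \<in> nbrs G y \<Longrightarrow> x \<in> fst G" for x y
    unfolding nbrs_def by blast
  have u': "u' \<in> fst G" "u \<in> nbrs G u'" and w': "w' \<in> fst G" "w \<in> nbrs G w'"
    using nu nw nbrs_sym nbrs_vertex by blast+
  have vertices: "{v, u, w, u', w'} \<subseteq> fst G"
    using \<open>v \<in> fst G\<close> nv nbrs_vertex u'(1) w'(1) by blast
  show ?thesis
  proof (cases "u' = w'")
    case True
    then have "nbrs G u' = {w, u}"
      using card_2_eq_doubleton deg2 u' w' d1 by (metis distinct_length_2_or_more)
    moreover have "fst G = {v, u, u', w}"
      using cover vertices True by auto
    ultimately have "graph_iso G (cycle_graph 4)"
      using nv nu nw True d1
      by (intro graph_iso_cycle_graphI[where xs = "[v, u, u', w]"]) (simp_all add: s lessThan_nat_numeral)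
    then show ?thesis ..
  next
    case False
    obtain t where t: "t \<noteq> u" "nbrs G u' = {u, t}"
      using card_2_obtain_other deg2 u' by metis
    then have "t \<in> fst G" "u' \<in> nbrs G t"
      using nbrs_sym nbrs_vertex by blast+
    moreover have "t \<noteq> v" "t \<noteq> w"
      using \<open>u' \<in> nbrs G t\<close> nv nw d1 False by auto
    moreover have "t \<noteq> u'"
      using \<open>u' \<in> nbrs G t\<close> by (auto simp: mem_nbrs_iff[OF s] dest: adj_imp_neq)
    ultimately have "t = w'"
      using cover t(1) by auto
    then have "nbrs G w' = {w, u'}"
      using card_2_eq_doubleton deg2 w' \<open>u' \<in> nbrs G t\<close> d1 by (metis distinct_length_2_or_more)
    moreover have "nbrs G u' = {w', u}"
      using t \<open>t = w'\<close> by (simp add: insert_commute)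
    moreover have "fst G = {v, u, u', w', w}"
      using cover vertices by auto
    ultimately have "graph_iso G (cycle_graph 5)"
      using nv nu nw False d1 d2
      by (intro graph_iso_cycle_graphI[where xs = "[v, u, u', w', w]"])
        (auto simp: s lessThan_nat_numeral)
    then show ?thesis ..
  qed
qed

lemma strongly_regular_common_nbr_if_induced_path3:
  assumes "strongly_regular G" "has_induced_path3 G"
  shows "\<forall>x\<in>fst G. \<forall>y\<in>fst G. x \<noteq> y \<and> \<not> adj G x y \<longrightarrow> nbrs G x \<inter> nbrs G y \<noteq> {}"
proof -
  have s: "simple_graph G"
    using assms(1) unfolding strongly_regular_def by blast
  obtain \<mu> where mu: "\<forall>x\<in>fst G. \<forall>y\<in>fst G. x \<noteq> y \<and> \<not> adj G x y
      \<longrightarrow> card (nbrs G x \<inter> nbrs G y) = \<mu>"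
    using assms(1) unfolding strongly_regular_def by blast
  obtain u v w where path: "adj G u v" "adj G v w" "u \<noteq> w" "\<not> adj G u w"
    using assms(2) unfolding has_induced_path3_def by blast
  have "v \<in> nbrs G u \<inter> nbrs G w"
    using path(1,2) adj_commute[of G] by (simp add: mem_nbrs_iff[OF s])
  then have "card (nbrs G u \<inter> nbrs G w) > 0"
    using finite_nbrs[OF s] card_gt_0_iff by blast
  moreover have "u \<in> fst G" "w \<in> fst G"
    using adj_imp_vertices[OF s path(1)] adj_imp_vertices[OF s path(2)] by simp_all
  ultimately have "\<mu> > 0"
    using mu path(3,4) by metis
  then show ?thesis
    using mu by fastforce
qed

lemma graph_iso_cycle4_or_5_if_triangle_free:
  assumes srg: "strongly_regular G" and "\<not> has_triangle G"
    and path: "adj G u v" "adj G v w" "u \<noteq> w"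
    and "\<not> (has_triangle (line_graph G) \<and> has_induced_path3 (line_graph G))"
  shows "graph_iso G (cycle_graph 4) \<or> graph_iso G (cycle_graph 5)"
proof -
  have s: "simple_graph G"
    using srg unfolding strongly_regular_def by blast
  obtain k where deg: "\<forall>z\<in>fst G. card (nbrs G z) = k"
    using srg unfolding strongly_regular_def by blast
  have "\<not> adj G u w"
    using assms(2) path(1,2) unfolding has_triangle_def by blast
  then have "has_induced_path3 G"
    using path unfolding has_induced_path3_def by blast
  have vertices: "v \<in> fst G" "w \<in> fst G"
    using adj_imp_vertices[OF s path(2)] by simp_all
  have "card {u, w} \<le> card (nbrs G v)"
    using path(1,2) adj_commute[of G]
    by (intro card_mono finite_nbrs[OF s]) (simp add: mem_nbrs_iff[OF s])
  then have "2 \<le> k"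
    using deg vertices(1) path(3) by simp
  then obtain x where "x \<in> nbrs G w" "x \<noteq> v"
    using deg vertices(2) card_ge_2_obtain_other by metis
  then have "adj G w x" "x \<noteq> u"
    using \<open>\<not> adj G u w\<close> adj_commute[of G] by (auto simp: mem_nbrs_iff[OF s])
  then have "has_induced_path3 (line_graph G)"
    using has_induced_path3_line_graph[OF path(1,2)] path(3) \<open>x \<noteq> v\<close> by metis
  then have "card (nbrs G z) \<le> 2" for z
    using assms(6) card_nbrs_le_2_if_line_graph_triangle_free[OF s] by blast
  then have "\<forall>z\<in>fst G. card (nbrs G z) = 2"
    using deg vertices(1) \<open>2 \<le> k\<close> by (metis le_antisym)
  with s vertices(1) assms(2) show ?thesis
    using strongly_regular_common_nbr_if_induced_path3[OF srg \<open>has_induced_path3 G\<close>]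
    by (rule graph_iso_cycle4_or_5_if_two_regular)
qed

theorem mainTheorem8:
  fixes G :: "'a graph"
  assumes "simple_graph G"
    and "connected_graph G"
    and "\<not> graph_iso G (cycle_graph 3)"
    and "\<not> graph_iso G (cycle_graph 4)"
    and "\<not> graph_iso G (cycle_graph 5)"
  shows "\<not> strongly_regular G \<or> \<not> strongly_regular (line_graph G)
         \<or> \<not> strongly_regular (line_graph (line_graph G))"
proof (rule ccontr)
  assume "\<not> ?thesis"
  then have srg: "strongly_regular G" "strongly_regular (line_graph G)"
    "strongly_regular (line_graph (line_graph G))"
    by simp_all
  have G_dichotomy: "\<not> (has_triangle G \<and> has_induced_path3 G)"
    and L_dichotomy: "\<not> (has_triangle (line_graph G) \<and> has_induced_path3 (line_graph G))"
    using strongly_regular_line_graph_no_triangle_and_path3 srg by blast+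
  have "snd (line_graph G) \<noteq> {}"
    using srg(3) unfolding strongly_regular_def by simp
  then obtain u v w where path: "adj G u v" "adj G v w" "u \<noteq> w"
    by (rule line_graph_edge_obtain_path[OF assms(1)])
  show False
  proof (cases "has_triangle G")
    case True
    then show False
      using graph_iso_cycle3_if_triangle[OF assms(1,2) True G_dichotomy L_dichotomy] assms(3) by blast
  next
    case False
    then show False
      using graph_iso_cycle4_or_5_if_triangle_free[OF srg(1) False path L_dichotomy] assms(4,5)
      by blast
  qed
qed

end
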